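(* Let $\mathcal{C}=\mathsf{CSS}(A,B)$ be a qudit CSS code on $n$ qudits and $H_A$ a parity-check matrix for $A$. If two columns of $H_A$ are identical, then either $\mathcal{C}$ has distance at most $2$, or swapping the two corresponding physical qudits acts as a logical identity on $\mathcal{C}$.
   Context: Let $q$ be a prime power. For classical codes $A,B\subseteq\mathbb{F}_q^n$ with full-row-rank parity-check matrices $H_A,H_B$ satisfying $H_AH_B^T=0$, $\mathsf{CSS}(A,B)$ is the qudit stabilizer code with $X$-type stabilizers the generalized Paulis $X^v$ ($v$ in the row space of $H_A$) and $Z$-type stabilizers $Z^w$ ($w$ in the row space of $H_B$). A logical identity is an operator acting as the identity on the codespace. *)

theory Defs
  imports "HOL-Analysis.Analysis" "HOL-Library.Extended_Nat"
begin

text \<open>Qudit states on n qudits (n = CARD('n)) of local dimension q = CARD('a):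
  functions from computational basis labels x in F_q^n to complex amplitudes.\<close>

text \<open>A nontrivial additive character of F_q (e.g. x maps to omega^tr(x)).\<close>
definition add_char :: "('a::field \<Rightarrow> complex) \<Rightarrow> bool" where
  "add_char ch \<longleftrightarrow> ch 0 = 1 \<and> (\<forall>x y. ch (x + y) = ch x * ch y) \<and> (\<exists>x. ch x \<noteq> 1)"

definition dotp :: "'a::semiring_1 ^ 'n \<Rightarrow> 'a ^ 'n \<Rightarrow> 'a" where
  "dotp a b = (\<Sum>i\<in>UNIV. a $ i * b $ i)"

text \<open>Generalized Paulis: X^a |x> = |x + a>,  Z^b |x> = ch(b.x) |x>.\<close>
definition pauliX :: "'a::ab_group_add ^ 'n \<Rightarrow> ('a ^ 'n \<Rightarrow> complex) \<Rightarrow> ('a ^ 'n \<Rightarrow> complex)" where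
  "pauliX a \<psi> = (\<lambda>x. \<psi> (x - a))"

definition pauliZ :: "('a::comm_ring_1 \<Rightarrow> complex) \<Rightarrow> 'a ^ 'n \<Rightarrow> ('a ^ 'n \<Rightarrow> complex) \<Rightarrow> ('a ^ 'n \<Rightarrow> complex)" where
  "pauliZ ch b \<psi> = (\<lambda>x. ch (dotp b x) * \<psi> x)"

definition pauli :: "('a::comm_ring_1 \<Rightarrow> complex) \<Rightarrow> complex \<Rightarrow> 'a ^ 'n \<Rightarrow> 'a ^ 'n
    \<Rightarrow> ('a ^ 'n \<Rightarrow> complex) \<Rightarrow> ('a ^ 'n \<Rightarrow> complex)" where
  "pauli ch c a b \<psi> = (\<lambda>x. c * pauliX a (pauliZ ch b \<psi>) x)"

definition pauli_weight :: "'a::zero ^ 'n \<Rightarrow> 'a ^ 'n \<Rightarrow> nat" where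
  "pauli_weight a b = card {i. a $ i \<noteq> 0 \<or> b $ i \<noteq> 0}"

definition row_space :: "'a::semiring_1 ^ 'n ^ 'm \<Rightarrow> ('a ^ 'n) set" where
  "row_space H = range (\<lambda>y. y v* H)"

definition full_row_rank :: "'a::semiring_1 ^ 'n ^ 'm \<Rightarrow> bool" where
  "full_row_rank H \<longleftrightarrow> (\<forall>y. y v* H = 0 \<longrightarrow> y = 0)"

definition css_gens :: "('a::comm_ring_1 \<Rightarrow> complex) \<Rightarrow> 'a ^ 'n ^ 'ma \<Rightarrow> 'a ^ 'n ^ 'mb
    \<Rightarrow> (('a ^ 'n \<Rightarrow> complex) \<Rightarrow> ('a ^ 'n \<Rightarrow> complex)) set" where
  "css_gens ch HA HB = {pauliX v | v. v \<in> row_space HA} \<union> {pauliZ ch w | w. w \<in> row_space HB}"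

inductive_set gen_group :: "('s \<Rightarrow> 's) set \<Rightarrow> ('s \<Rightarrow> 's) set" for G where
  gen_id: "id \<in> gen_group G"
| gen_mult: "g \<in> G \<Longrightarrow> s \<in> gen_group G \<Longrightarrow> g \<circ> s \<in> gen_group G"

definition css_codespace :: "('a::comm_ring_1 \<Rightarrow> complex) \<Rightarrow> 'a ^ 'n ^ 'ma \<Rightarrow> 'a ^ 'n ^ 'mb
    \<Rightarrow> ('a ^ 'n \<Rightarrow> complex) set" where
  "css_codespace ch HA HB = {\<psi>. \<forall>g\<in>css_gens ch HA HB. g \<psi> = \<psi>}"

definition nontrivial_logical :: "('a::comm_ring_1 \<Rightarrow> complex) \<Rightarrow> 'a ^ 'n ^ 'ma \<Rightarrow> 'a ^ 'n ^ 'mb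
    \<Rightarrow> complex \<Rightarrow> 'a ^ 'n \<Rightarrow> 'a ^ 'n \<Rightarrow> bool" where
  "nontrivial_logical ch HA HB c a b \<longleftrightarrow> c \<noteq> 0 \<and>
     (\<forall>s\<in>gen_group (css_gens ch HA HB). pauli ch c a b \<circ> s = s \<circ> pauli ch c a b) \<and>
     \<not> (\<exists>d s. s \<in> gen_group (css_gens ch HA HB) \<and> pauli ch c a b = (\<lambda>\<psi> x. d * s \<psi> x))"

text \<open>Distance: minimum weight of a nontrivial logical Pauli (infinity if none).\<close>
definition css_distance :: "('a::comm_ring_1 \<Rightarrow> complex) \<Rightarrow> 'a ^ 'n ^ 'ma \<Rightarrow> 'a ^ 'n ^ 'mb \<Rightarrow> enat" where
  "css_distance ch HA HB =
     (INF p \<in> {(c, a, b). nontrivial_logical ch HA HB c a b}. enat (pauli_weight (fst (snd p)) (snd (snd p))))"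

definition swap_qudits :: "'n \<Rightarrow> 'n \<Rightarrow> ('a ^ 'n \<Rightarrow> complex) \<Rightarrow> ('a ^ 'n \<Rightarrow> complex)" where
  "swap_qudits i j \<psi> = (\<lambda>x. \<psi> (\<chi> k. x $ (if k = i then j else if k = j then i else k)))"

definition logical_identity :: "(('s \<Rightarrow> complex) \<Rightarrow> ('s \<Rightarrow> complex)) \<Rightarrow> ('s \<Rightarrow> complex) set \<Rightarrow> bool" where
  "logical_identity U C \<longleftrightarrow> (\<forall>\<psi>\<in>C. U \<psi> = \<psi>)"

end

theory Submission imports Defs begin

text \<open>Let e = e_i - e_j. Since the columns i and j of H_A agree, every X-stabilizer X^v has
  v_i = v_j, so the weight-2 operator Z^e commutes with all stabilizers. If some codeword has a
  basis state x with x_i \<noteq> x_j in its support, then Z^e is not a multiple of a stabilizer: every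
  stabilizer fixes the coset states |y + row(H_A)> for y orthogonal to row(H_B), whereas Z^e
  multiplies them by different phases, because such y include 0 and all multiples of x. Hence
  the distance is at most 2. Otherwise every codeword is supported on {x. x_i = x_j}, where the
  swap of the qudits i and j acts trivially.\<close>

lemma dotp_add_right: "dotp w (x + y) = dotp w x + dotp w (y :: 'a::comm_semiring_1 ^ 'n)"
  by (simp add: dotp_def sum.distrib algebra_simps)

lemma dotp_diff_right: "dotp w (x - y) = dotp w x - dotp w (y :: 'a::comm_ring_1 ^ 'n)"
  by (simp add: dotp_def sum_subtractf algebra_simps)

lemma dotp_diff_left: "dotp (v - w) x = dotp v x - dotp w (x :: 'a::comm_ring_1 ^ 'n)"
  by (simp add: dotp_def sum_subtractf algebra_simps)

lemma dotp_scale_left: "dotp (c *s w) x = c * dotp w (x :: 'a::comm_semiring_1 ^ 'n)"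
  by (simp add: dotp_def sum_distrib_left algebra_simps)

lemma dotp_scale_right: "dotp w (c *s x) = c * dotp w (x :: 'a::comm_semiring_1 ^ 'n)"
  by (simp add: dotp_def sum_distrib_left algebra_simps)

lemma dotp_zero_right [simp]: "dotp w (0 :: 'a::comm_semiring_1 ^ 'n) = 0"
  by (simp add: dotp_def)

lemma dotp_axis_left: "dotp (axis i c) x = c * (x :: 'a::comm_semiring_1 ^ 'n) $ i"
  by (simp add: dotp_def axis_def if_distrib[of "\<lambda>a. a * _"] cong: if_cong)

lemma dotp_vector_matrix_mult: "dotp (x v* A) y = dotp x (A *v (y :: 'a::comm_semiring_1 ^ 'n))"
  unfolding dotp_def vector_matrix_mult_def matrix_vector_mult_def
  by (simp add: sum_distrib_left sum_distrib_right mult.assoc) (rule sum.swap)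

lemma row_space_add: "u \<in> row_space H \<Longrightarrow> v \<in> row_space H \<Longrightarrow> u + v \<in> row_space H"
  unfolding row_space_def by (auto simp flip: vector_matrix_left_distrib)

lemma row_space_diff:
  "u \<in> row_space H \<Longrightarrow> v \<in> row_space H \<Longrightarrow> u - v \<in> row_space (H :: 'a::comm_ring_1 ^ 'n ^ 'm)"
  unfolding row_space_def by (auto simp flip: vector_matrix_mult_diff_distrib)

lemma row_space_scale: "u \<in> row_space H \<Longrightarrow> c *s u \<in> row_space (H :: 'a::field ^ 'n ^ 'm)"
  unfolding row_space_def by (auto simp flip: scalar_vector_matrix_assoc)

lemma zero_in_row_space: "0 \<in> row_space H"
  unfolding row_space_def by (metis rangeI vector_matrix_mult_0)

lemma row_space_equal_columns:
  assumes "column i H = column j H" and "v \<in> row_space H"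
  shows "v $ i = v $ j"
proof -
  obtain y where "v = y v* H" using assms(2) unfolding row_space_def by blast
  with assms(1) show ?thesis by (simp add: vector_matrix_mult_def column_def vec_eq_iff)
qed

lemma row_spaces_orthogonal:
  fixes HA :: "'a::comm_ring_1 ^ 'n ^ 'ma" and HB :: "'a ^ 'n ^ 'mb"
  assumes "HA ** transpose HB = 0" and "u \<in> row_space HA" and "w \<in> row_space HB"
  shows "dotp w u = 0"
proof -
  obtain a b where u: "u = a v* HA" and w: "w = b v* HB"
    using assms(2,3) unfolding row_space_def by blast
  have "HB ** transpose HA = transpose (HA ** transpose HB)"
    by (simp add: matrix_transpose_mul)
  also have "\<dots> = 0" using assms(1) by (simp add: transpose_def vec_eq_iff)
  finally have "HB *v u = 0" by (simp add: u matrix_vector_mul_assoc flip: transpose_matrix_vector)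
  then show ?thesis by (simp add: w dotp_vector_matrix_mult)
qed

lemma gen_group_fixed_point:
  assumes "s \<in> gen_group G" and "\<And>g. g \<in> G \<Longrightarrow> g \<psi> = \<psi>"
  shows "s \<psi> = \<psi>"
  using assms by (induction rule: gen_group.induct) auto

lemma gen_group_commute:
  assumes "s \<in> gen_group G" and "\<And>g. g \<in> G \<Longrightarrow> P \<circ> g = g \<circ> P"
  shows "P \<circ> s = s \<circ> P"
  using assms
proof (induction rule: gen_group.induct)
  case gen_id
  then show ?case by simp
next
  case (gen_mult g s)
  have "P \<circ> g = g \<circ> P" using gen_mult.prems gen_mult.hyps(1) by blast
  moreover have "P \<circ> s = s \<circ> P" using gen_mult.IH gen_mult.prems by blast
  ultimately show ?case by (metis comp_assoc)
qed

lemma pauliZ_pauliX_commute: "dotp b a = 0 \<Longrightarrow> pauliZ ch b \<circ> pauliX a = pauliX a \<circ> pauliZ ch b"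
  by (simp add: fun_eq_iff pauliX_def pauliZ_def dotp_diff_right)

lemma pauliZ_pauliZ_commute: "pauliZ ch b \<circ> pauliZ ch c = pauliZ ch c \<circ> pauliZ ch b"
  by (simp add: fun_eq_iff pauliZ_def)

lemma pauliZ_commutes_with_stabilizers:
  assumes "\<forall>v\<in>row_space HA. dotp e v = 0" and "s \<in> gen_group (css_gens ch HA HB)"
  shows "pauliZ ch e \<circ> s = s \<circ> pauliZ ch e"
  using assms(2)
proof (rule gen_group_commute)
  fix g assume "g \<in> css_gens ch HA HB"
  with assms(1) show "pauliZ ch e \<circ> g = g \<circ> pauliZ ch e"
    by (auto simp: css_gens_def pauliZ_pauliX_commute pauliZ_pauliZ_commute)
qed

lemma css_codespace_support_orthogonal:
  fixes HA :: "'a::field ^ 'n ^ 'ma" and HB :: "'a ^ 'n ^ 'mb"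
  assumes "add_char ch" and "\<psi> \<in> css_codespace ch HA HB" and "\<psi> x \<noteq> 0"
    and "w \<in> row_space HB"
  shows "dotp w x = 0"
proof (rule ccontr)
  assume wx: "dotp w x \<noteq> 0"
  obtain t where t: "ch t \<noteq> 1" using assms(1) by (auto simp: add_char_def)
  define w' where "w' = (t / dotp w x) *s w"
  have "w' \<in> row_space HB" using assms(4) by (simp add: w'_def row_space_scale)
  then have "pauliZ ch w' \<psi> = \<psi>" using assms(2) by (auto simp: css_codespace_def css_gens_def)
  then have "ch (dotp w' x) * \<psi> x = \<psi> x" by (metis pauliZ_def)
  moreover have "dotp w' x = t" using wx by (simp add: w'_def dotp_scale_left)
  ultimately show False using t assms(3) by simp
qed

definition coset_state :: "'a::comm_ring_1 ^ 'n ^ 'm \<Rightarrow> 'a ^ 'n \<Rightarrow> 'a ^ 'n \<Rightarrow> complex" where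
  "coset_state H y = (\<lambda>z. if z - y \<in> row_space H then 1 else 0)"

lemma coset_state_in_css_codespace:
  fixes HA :: "'a::comm_ring_1 ^ 'n ^ 'ma" and HB :: "'a ^ 'n ^ 'mb"
  assumes "ch 0 = 1" and "HA ** transpose HB = 0" and "\<forall>w\<in>row_space HB. dotp w y = 0"
  shows "coset_state HA y \<in> css_codespace ch HA HB"
  unfolding css_codespace_def css_gens_def
proof (intro CollectI ballI, elim UnE CollectE exE conjE)
  fix g v assume g: "g = pauliX v" and v: "v \<in> row_space HA"
  have "z - v - y \<in> row_space HA \<longleftrightarrow> z - y \<in> row_space HA" for z
    using row_space_add[OF _ v, of "z - v - y"] row_space_diff[OF _ v, of "z - y"]
    by (auto simp: algebra_simps)
  then show "g (coset_state HA y) = coset_state HA y"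
    by (simp add: g pauliX_def coset_state_def)
next
  fix g w assume g: "g = pauliZ ch w" and w: "w \<in> row_space HB"
  have "dotp w z = 0" if "z - y \<in> row_space HA" for z
    using dotp_add_right[of w y "z - y"] row_spaces_orthogonal[OF assms(2) that w] assms(3) w
    by simp
  then show "g (coset_state HA y) = coset_state HA y"
    by (auto simp: g pauliZ_def coset_state_def assms(1))
qed

lemma pauliZ_not_stabilizer_multiple:
  fixes HA :: "'a::field ^ 'n ^ 'ma" and HB :: "'a ^ 'n ^ 'mb"
  assumes ch: "add_char ch" and orth: "HA ** transpose HB = 0"
    and "\<psi> \<in> css_codespace ch HA HB" and "\<psi> x \<noteq> 0" and ex: "dotp e x \<noteq> 0"
  shows "\<not> (\<exists>d s. s \<in> gen_group (css_gens ch HA HB) \<and> pauliZ ch e = (\<lambda>\<psi> x. d * s \<psi> x))"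
proof
  assume "\<exists>d s. s \<in> gen_group (css_gens ch HA HB) \<and> pauliZ ch e = (\<lambda>\<psi> x. d * s \<psi> x)"
  then obtain d s where s: "s \<in> gen_group (css_gens ch HA HB)"
    and eq: "pauliZ ch e = (\<lambda>\<psi> x. d * s \<psi> x)" by blast
  have ch0: "ch 0 = 1" using ch by (simp add: add_char_def)
  obtain t where t: "ch t \<noteq> 1" using ch by (auto simp: add_char_def)
  have phase: "ch (dotp e y) = d" if y: "\<forall>w\<in>row_space HB. dotp w y = 0" for y
  proof -
    have "s (coset_state HA y) = coset_state HA y"
      using gen_group_fixed_point[OF s] coset_state_in_css_codespace[of ch HA HB y, OF ch0 orth y]
      by (auto simp: css_codespace_def)
    moreover have "pauliZ ch e (coset_state HA y) y = d * s (coset_state HA y) y"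
      using eq by metis
    ultimately show ?thesis by (simp add: pauliZ_def coset_state_def zero_in_row_space)
  qed
  have "d = 1" using phase[of 0] ch0 by simp
  moreover have "\<forall>w\<in>row_space HB. dotp w x = 0"
    using css_codespace_support_orthogonal[OF ch assms(3,4)] by blast
  then have "ch (dotp e ((t / dotp e x) *s x)) = d" by (intro phase) (simp add: dotp_scale_right)
  then have "ch t = d" using ex by (simp add: dotp_scale_right)
  ultimately show False using t by simp
qed

lemma pauliZ_nontrivial_logical:
  fixes HA :: "'a::field ^ 'n ^ 'ma" and HB :: "'a ^ 'n ^ 'mb"
  assumes "add_char ch" and "HA ** transpose HB = 0" and "\<forall>v\<in>row_space HA. dotp e v = 0"
    and "\<psi> \<in> css_codespace ch HA HB" and "\<psi> x \<noteq> 0" and "dotp e x \<noteq> 0"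
  shows "nontrivial_logical ch HA HB 1 0 e"
proof -
  have "pauli ch 1 0 e = pauliZ ch e" by (simp add: fun_eq_iff pauli_def pauliX_def)
  then show ?thesis
    unfolding nontrivial_logical_def
    using pauliZ_commutes_with_stabilizers[where ch = ch and HB = HB, OF assms(3)]
      pauliZ_not_stabilizer_multiple[OF assms(1,2,4-6)]
    by simp
qed

lemma css_distance_le_weight:
  "nontrivial_logical ch HA HB c a b \<Longrightarrow> css_distance ch HA HB \<le> pauli_weight a b"
  unfolding css_distance_def by (rule INF_lower2[of "(c, a, b)"]) auto

lemma pauli_weight_axis_diff:
  "i \<noteq> j \<Longrightarrow> pauli_weight 0 (axis i 1 - axis j (1 :: 'a::ring_1) :: 'a ^ 'n) = 2"
proof -
  assume "i \<noteq> j"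
  then have "{k. (0 :: 'a ^ 'n) $ k \<noteq> 0 \<or> (axis i 1 - axis j (1 :: 'a)) $ k \<noteq> 0} = {i, j}"
    by (auto simp: axis_def)
  with \<open>i \<noteq> j\<close> show ?thesis by (simp add: pauli_weight_def)
qed

lemma swap_qudits_fixes:
  fixes \<psi> :: "'a ^ 'n \<Rightarrow> complex"
  assumes "\<And>x. \<psi> x \<noteq> 0 \<Longrightarrow> x $ i = x $ j"
  shows "swap_qudits i j \<psi> = \<psi>"
proof
  fix x
  define y :: "'a ^ 'n" where "y = (\<chi> k. x $ (if k = i then j else if k = j then i else k))"
  have "\<psi> y = \<psi> x"
  proof (cases "x $ i = x $ j")
    case True
    then have "y = x" by (simp add: y_def vec_eq_iff)
    then show ?thesis by simp
  next
    case False
    then have "y $ i \<noteq> y $ j" by (auto simp: y_def)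
    with False show ?thesis using assms by metis
  qed
  then show "swap_qudits i j \<psi> x = \<psi> x" by (simp add: swap_qudits_def y_def)
qed

theorem lemma3:
  fixes HA :: "'a::{field,finite} ^ 'n::finite ^ 'ma::finite"
    and HB :: "'a ^ 'n ^ 'mb::finite"
    and ch :: "'a \<Rightarrow> complex"
    and i j :: 'n
  assumes "add_char ch"
    and "full_row_rank HA" and "full_row_rank HB"
    and "HA ** transpose HB = 0"
    and "i \<noteq> j" and "column i HA = column j HA"
  shows "css_distance ch HA HB \<le> 2 \<or>
         logical_identity (swap_qudits i j) (css_codespace ch HA HB)"
proof (cases "\<exists>\<psi>\<in>css_codespace ch HA HB. \<exists>x. \<psi> x \<noteq> 0 \<and> x $ i \<noteq> x $ j")
  case True
  then obtain \<psi> x where \<psi>: "\<psi> \<in> css_codespace ch HA HB" "\<psi> x \<noteq> 0" and "x $ i \<noteq> x $ j"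
    by blast
  define e :: "'a ^ 'n" where "e = axis i 1 - axis j 1"
  have "\<forall>v\<in>row_space HA. dotp e v = 0"
    using row_space_equal_columns[OF assms(6)] by (simp add: e_def dotp_diff_left dotp_axis_left)
  moreover have "dotp e x \<noteq> 0"
    using \<open>x $ i \<noteq> x $ j\<close> by (simp add: e_def dotp_diff_left dotp_axis_left)
  ultimately have "nontrivial_logical ch HA HB 1 0 e"
    using pauliZ_nontrivial_logical[OF assms(1,4) _ \<psi>] by blast
  then have "css_distance ch HA HB \<le> pauli_weight 0 e" by (rule css_distance_le_weight)
  with assms(5) show ?thesis by (simp add: e_def pauli_weight_axis_diff numeral_eq_enat)
next
  case False
  then show ?thesis by (auto simp: logical_identity_def intro: swap_qudits_fixes)
qed

end
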